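(* For every tree $\Gamma$ as described, there exist coefficients $\lambda_x>0$ and $\beta_x\in\mathbb R$ ($x\in\Gamma$) such that the associated Jacobi matrix $J$ with domain $\mathcal F(\Gamma)$ is not essentially selfadjoint in $\ell^2(\Gamma)$.
   Context: Let $\Gamma$ be an infinite connected tree whose vertices are arranged in levels $\ell(x)\in\{0,1,2,\dots\}$: every vertex $x$ is adjacent to exactly one vertex $x'$ with $\ell(x')=\ell(x)+1$; for $\ell(x)\ge 1$ the set $N_x=\{y:\ y'=x\}$ of neighbours of $x$ on level $\ell(x)-1$ is finite and nonempty; $N_x=\emptyset$ if $\ell(x)=0$; there are no other edges. Given $\lambda_x>0$, $\beta_x\in\mathbb R$, the Jacobi matrix $J$ acts on functions $v:\Gamma\to\mathbb C$ by $(Jv)(x)=\lambda_x v(x')+\beta_x v(x)+\sum_{y\in N_x}\lambda_y v(y)$. $\mathcal F(\Gamma)$ denotes the finitely supported functions; $J$ with domain $\mathcal F(\Gamma)$ is symmetric in $\ell^2(\Gamma)$. *)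

theory Defs
  imports "HOL-Analysis.Analysis"
begin

text \<open>A levelled tree: the vertex set is the type 'a, lev is the level function,
  par x is the unique neighbour x' of x on the next level, N x = par -` {x}.
  The only edges are {x, par x}.\<close>

definition level_tree :: "('a \<Rightarrow> nat) \<Rightarrow> ('a \<Rightarrow> 'a) \<Rightarrow> bool" where
  "level_tree lev par \<longleftrightarrow>
     (\<forall>x. lev (par x) = lev x + 1) \<and>
     (\<forall>x. lev x \<ge> 1 \<longrightarrow> finite {y. par y = x} \<and> {y. par y = x} \<noteq> {}) \<and>
     (\<forall>x. lev x = 0 \<longrightarrow> {y. par y = x} = {}) \<and>
     (\<forall>x y. \<exists>n m. (par ^^ n) x = (par ^^ m) y) \<and>
     infinite (UNIV :: 'a set)"

definition jacobi :: "('a \<Rightarrow> 'a) \<Rightarrow> ('a \<Rightarrow> real) \<Rightarrow> ('a \<Rightarrow> real)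
                     \<Rightarrow> ('a \<Rightarrow> complex) \<Rightarrow> 'a \<Rightarrow> complex" where
  "jacobi par lam beta v x =
     complex_of_real (lam x) * v (par x) + complex_of_real (beta x) * v x
     + (\<Sum>y\<in>{y. par y = x}. complex_of_real (lam y) * v y)"

definition l2 :: "('a \<Rightarrow> complex) set" where
  "l2 = {v. (\<lambda>x. (cmod (v x))\<^sup>2) summable_on UNIV}"

definition l2_inner :: "('a \<Rightarrow> complex) \<Rightarrow> ('a \<Rightarrow> complex) \<Rightarrow> complex" where
  "l2_inner v w = (\<Sum>\<^sub>\<infinity>x. v x * cnj (w x))"

definition l2_norm :: "('a \<Rightarrow> complex) \<Rightarrow> real" where
  "l2_norm v = sqrt (\<Sum>\<^sub>\<infinity>x. (cmod (v x))\<^sup>2)"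

definition fin_supp :: "('a \<Rightarrow> complex) set" where
  "fin_supp = {v. finite {x. v x \<noteq> 0}}"

text \<open>Operators are represented by their graphs (subsets of l2 x l2).\<close>

definition graph_closure :: "(('a \<Rightarrow> complex) \<times> ('a \<Rightarrow> complex)) set
                             \<Rightarrow> (('a \<Rightarrow> complex) \<times> ('a \<Rightarrow> complex)) set" where
  "graph_closure G = {(u, w). u \<in> l2 \<and> w \<in> l2 \<and>
      (\<exists>s. (\<forall>n. s n \<in> G) \<and> (\<lambda>n. l2_norm (fst (s n) - u)) \<longlonglongrightarrow> 0
                         \<and> (\<lambda>n. l2_norm (snd (s n) - w)) \<longlonglongrightarrow> 0)}"

definition graph_adjoint :: "(('a \<Rightarrow> complex) \<times> ('a \<Rightarrow> complex)) set
                             \<Rightarrow> (('a \<Rightarrow> complex) \<times> ('a \<Rightarrow> complex)) set" where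
  "graph_adjoint G = {(v, w). v \<in> l2 \<and> w \<in> l2 \<and>
      (\<forall>(u, z)\<in>G. l2_inner z v = l2_inner u w)}"

definition ess_selfadjoint :: "(('a \<Rightarrow> complex) \<Rightarrow> ('a \<Rightarrow> complex)) \<Rightarrow> ('a \<Rightarrow> complex) set \<Rightarrow> bool" where
  "ess_selfadjoint T D \<longleftrightarrow>
     (let G = graph_closure {(u, T u) | u. u \<in> D} in graph_adjoint G = G)"

end

theory Submission
  imports Defs
begin

text \<open>Fix a ray x0, x0', x0'', ... in the tree. Give its n-th edge weight 2^n, give every other
  edge below a vertex with c children weight 1/c, and take all beta = 0. On the ray, J v = 0
  becomes 2^n v(n+1) + 2^(n-1) v(n-1) = 0, which has the two square summable solutions (-1/2)^k
  on the even resp. odd indices; the odd one even satisfies J w = delta at x0 on the ray.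
  Extended by zero off the ray, J v and J w live there only on children of ray vertices and stay
  square summable thanks to the weights 1/c. Green's formula on finitely supported functions and
  continuity of the inner product put both (v, J v) and (w, J w) into the adjoint of the closure
  of J, yet <J v, w> = 0 differs from <v, J w> = 1, so that adjoint is not symmetric and cannot
  equal the closure.\<close>

lemma l2_if_norm_le_add:
  assumes a: "a \<in> l2" and b: "b \<in> l2" and c: "\<And>x. cmod (c x) \<le> cmod (a x) + cmod (b x)"
  shows "c \<in> l2"
proof -
  have sum: "(\<lambda>x. 2 * (cmod (a x))\<^sup>2 + 2 * (cmod (b x))\<^sup>2) summable_on UNIV"
    using a b by (intro summable_on_add summable_on_cmult_right) (auto simp: l2_def)
  have "(cmod (c x))\<^sup>2 \<le> 2 * (cmod (a x))\<^sup>2 + 2 * (cmod (b x))\<^sup>2" for x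
  proof -
    have "(cmod (c x))\<^sup>2 \<le> (cmod (a x) + cmod (b x))\<^sup>2"
      using c[of x] by (intro power_mono) auto
    also have "\<dots> \<le> 2 * (cmod (a x))\<^sup>2 + 2 * (cmod (b x))\<^sup>2"
      using zero_le_power2[of "cmod (a x) - cmod (b x)"] by (simp add: power2_eq_square algebra_simps)
    finally show ?thesis .
  qed
  then show ?thesis
    unfolding l2_def by (auto intro: summable_on_comparison_test[OF sum])
qed

lemma l2_diff: "a \<in> l2 \<Longrightarrow> b \<in> l2 \<Longrightarrow> a - b \<in> l2"
  by (rule l2_if_norm_le_add[of a b]) (auto simp: norm_triangle_ineq4)

lemma l2_add: "a \<in> l2 \<Longrightarrow> b \<in> l2 \<Longrightarrow> (\<lambda>x. a x + b x) \<in> l2"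
  by (rule l2_if_norm_le_add[of a b]) (auto simp: norm_triangle_ineq)

lemma fin_supp_in_l2: "v \<in> fin_supp \<Longrightarrow> v \<in> l2"
  unfolding l2_def fin_supp_def mem_Collect_eq
  by (subst summable_on_cong_neutral[where T="{x. v x \<noteq> 0}" and g="\<lambda>x. (cmod (v x))\<^sup>2"]) auto

lemma L2_set_le_l2_norm:
  assumes "a \<in> l2" "finite F"
  shows "L2_set (\<lambda>x. cmod (a x)) F \<le> l2_norm a"
proof -
  have "(\<Sum>x\<in>F. (cmod (a x))\<^sup>2) \<le> (\<Sum>\<^sub>\<infinity>x. (cmod (a x))\<^sup>2)"
    by (rule finite_sum_le_infsum) (use assms in \<open>auto simp: l2_def\<close>)
  then show ?thesis
    unfolding L2_set_def l2_norm_def by (rule real_sqrt_le_mono)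
qed

lemma sum_norm_mult_cnj_le_l2_norm:
  assumes "a \<in> l2" "b \<in> l2" "finite F"
  shows "(\<Sum>x\<in>F. norm (a x * cnj (b x))) \<le> l2_norm a * l2_norm b"
proof -
  have "(\<Sum>x\<in>F. norm (a x * cnj (b x))) = (\<Sum>x\<in>F. \<bar>cmod (a x)\<bar> * \<bar>cmod (b x)\<bar>)"
    by (simp add: norm_mult)
  also have "\<dots> \<le> L2_set (\<lambda>x. cmod (a x)) F * L2_set (\<lambda>x. cmod (b x)) F"
    by (rule L2_set_mult_ineq)
  also have "\<dots> \<le> l2_norm a * l2_norm b"
    using assms by (intro mult_mono L2_set_le_l2_norm) (auto simp: l2_norm_def intro: infsum_nonneg)
  finally show ?thesis .
qed

lemma l2_inner_abs_summable:
  assumes "a \<in> l2" "b \<in> l2"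
  shows "(\<lambda>x. norm (a x * cnj (b x))) summable_on UNIV"
  by (rule nonneg_bdd_above_summable_on)
     (use assms in \<open>auto intro!: bdd_aboveI2 sum_norm_mult_cnj_le_l2_norm\<close>)

lemma l2_cauchy_schwarz:
  assumes "a \<in> l2" "b \<in> l2"
  shows "cmod (l2_inner a b) \<le> l2_norm a * l2_norm b"
proof -
  have "cmod (l2_inner a b) \<le> (\<Sum>\<^sub>\<infinity>x. norm (a x * cnj (b x)))"
    unfolding l2_inner_def by (rule norm_infsum_bound[OF l2_inner_abs_summable[OF assms]])
  also have "\<dots> \<le> l2_norm a * l2_norm b"
    by (rule infsum_le_finite_sums[OF l2_inner_abs_summable[OF assms]])
       (use assms in \<open>simp add: sum_norm_mult_cnj_le_l2_norm\<close>)
  finally show ?thesis .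
qed

lemma l2_inner_diff_left:
  assumes "a \<in> l2" "c \<in> l2" "b \<in> l2"
  shows "l2_inner (a - c) b = l2_inner a b - l2_inner c b"
proof -
  have "(\<lambda>x. a x * cnj (b x)) summable_on UNIV" "(\<lambda>x. - (c x * cnj (b x))) summable_on UNIV"
    using assms by (auto simp: summable_on_uminus intro: abs_summable_summable l2_inner_abs_summable)
  then have "(\<Sum>\<^sub>\<infinity>x. a x * cnj (b x) + - (c x * cnj (b x))) = l2_inner a b - l2_inner c b"
    unfolding l2_inner_def by (subst infsum_add) (simp_all add: infsum_uminus)
  moreover have "(\<lambda>x. (a - c) x * cnj (b x)) = (\<lambda>x. a x * cnj (b x) + - (c x * cnj (b x)))"
    by (auto simp: algebra_simps)
  ultimately show ?thesis
    unfolding l2_inner_def by simp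
qed

lemma tendsto_l2_inner_left:
  assumes a: "a \<in> l2" and b: "b \<in> l2" and s: "\<And>n. s n \<in> l2"
    and lim: "(\<lambda>n. l2_norm (s n - a)) \<longlonglongrightarrow> 0"
  shows "(\<lambda>n. l2_inner (s n) b) \<longlonglongrightarrow> l2_inner a b"
proof (rule LIM_zero_cancel)
  have "\<forall>n. norm (l2_inner (s n) b - l2_inner a b) \<le> l2_norm (s n - a) * l2_norm b"
    using l2_inner_diff_left[OF s a b] l2_cauchy_schwarz[OF l2_diff[OF s a] b] by simp
  then show "(\<lambda>n. l2_inner (s n) b - l2_inner a b) \<longlonglongrightarrow> 0"
    by (rule Lim_null_comparison[OF always_eventually tendsto_mult_left_zero[OF lim]])
qed

definition jacobi_kernel :: "('a \<Rightarrow> 'a) \<Rightarrow> ('a \<Rightarrow> real) \<Rightarrow> 'a \<Rightarrow> 'a \<Rightarrow> real" where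
  "jacobi_kernel par lam x y = (if par x = y then lam x else 0) + (if par y = x then lam y else 0)"

lemma jacobi_kernel_sym: "jacobi_kernel par lam x y = jacobi_kernel par lam y x"
  unfolding jacobi_kernel_def by simp

lemma jacobi_eq_kernel_sum:
  assumes "finite {y. par y = x}" "finite E"
    and "par x \<in> E \<or> f (par x) = 0" and "\<And>y. par y = x \<Longrightarrow> y \<in> E \<or> f y = 0"
  shows "jacobi par lam beta f x =
           complex_of_real (beta x) * f x + (\<Sum>y\<in>E. complex_of_real (jacobi_kernel par lam x y) * f y)"
proof -
  have "(\<Sum>y\<in>E. jacobi_kernel par lam x y * f y) =
        (\<Sum>y\<in>E. if par x = y then lam x * f y else 0) + (\<Sum>y\<in>E. if par y = x then lam y * f y else 0)"
    unfolding jacobi_kernel_def sum.distrib[symmetric] by (rule sum.cong) (auto simp: distrib_right)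
  also have "(\<Sum>y\<in>E. if par x = y then lam x * f y else 0) = lam x * f (par x)"
    using assms(2,3) by (auto simp: sum.delta')
  also have "(\<Sum>y\<in>E. if par y = x then lam y * f y else 0) = (\<Sum>y\<in>{y\<in>E. par y = x}. lam y * f y)"
    using assms(2) by (simp add: sum.inter_filter)
  also have "\<dots> = (\<Sum>y\<in>{y. par y = x}. lam y * f y)"
    by (rule sum.mono_neutral_left) (use assms(1,4) in auto)
  finally show ?thesis
    unfolding jacobi_def by (simp add: algebra_simps)
qed

lemma sum_symmetric_kernel:
  fixes b :: "'a \<Rightarrow> real" and K :: "'a \<Rightarrow> 'a \<Rightarrow> real" and u v :: "'a \<Rightarrow> complex"
  assumes "\<And>x y. K x y = K y x"
  shows "(\<Sum>x\<in>E. (complex_of_real (b x) * u x + (\<Sum>y\<in>E. complex_of_real (K x y) * u y)) * cnj (v x)) =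
         (\<Sum>x\<in>E. u x * cnj (complex_of_real (b x) * v x + (\<Sum>y\<in>E. complex_of_real (K x y) * v y)))"
proof -
  have "(\<Sum>x\<in>E. \<Sum>y\<in>E. complex_of_real (K x y) * u y * cnj (v x)) =
        (\<Sum>y\<in>E. \<Sum>x\<in>E. complex_of_real (K x y) * u y * cnj (v x))"
    by (rule sum.swap)
  also have "\<dots> = (\<Sum>x\<in>E. \<Sum>y\<in>E. u x * (complex_of_real (K x y) * cnj (v y)))"
    by (simp add: assms mult_ac)
  finally show ?thesis
    by (simp add: sum.distrib distrib_left distrib_right sum_distrib_left sum_distrib_right mult_ac)
qed

definition closed_nbhd :: "('a \<Rightarrow> 'a) \<Rightarrow> 'a set \<Rightarrow> 'a set" where
  "closed_nbhd par F = F \<union> par ` F \<union> par -` F"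

lemma finite_closed_nbhd:
  assumes "\<And>x. finite {y. par y = x}" "finite F"
  shows "finite (closed_nbhd par F)"
proof -
  have "par -` F = (\<Union>x\<in>F. {y. par y = x})" by auto
  then show ?thesis
    using assms by (simp add: closed_nbhd_def)
qed

lemma jacobi_eq_0_outside_closed_nbhd:
  assumes "\<And>y. y \<notin> F \<Longrightarrow> u y = 0" "x \<notin> closed_nbhd par F"
  shows "jacobi par lam beta u x = 0"
proof -
  have "u x = 0" "u (par x) = 0" "\<forall>y. par y = x \<longrightarrow> u y = 0"
    using assms by (auto simp: closed_nbhd_def)
  then show ?thesis
    unfolding jacobi_def by simp
qed

lemma jacobi_fin_supp:
  assumes "\<And>x. finite {y. par y = x}" "u \<in> fin_supp"
  shows "jacobi par lam beta u \<in> fin_supp"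
proof -
  let ?F = "{x. u x \<noteq> 0}"
  have "{x. jacobi par lam beta u x \<noteq> 0} \<subseteq> closed_nbhd par ?F"
    using jacobi_eq_0_outside_closed_nbhd[of ?F u] by blast
  moreover have "finite (closed_nbhd par ?F)"
    using assms by (intro finite_closed_nbhd) (auto simp: fin_supp_def)
  ultimately show ?thesis
    unfolding fin_supp_def by (auto intro: finite_subset)
qed

lemma l2_inner_jacobi_fin_supp:
  assumes finch: "\<And>x. finite {y. par y = x}" and u: "u \<in> fin_supp"
  shows "l2_inner (jacobi par lam beta u) v = l2_inner u (jacobi par lam beta v)"
proof -
  define F where "F = {x. u x \<noteq> 0}"
  define E where "E = closed_nbhd par F"
  have fE: "finite E"
    using u finch by (auto simp: E_def F_def fin_supp_def intro: finite_closed_nbhd)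
  have uz: "\<And>x. x \<notin> F \<Longrightarrow> u x = 0" and FE: "F \<subseteq> E"
    by (auto simp: F_def E_def closed_nbhd_def)
  have "l2_inner (jacobi par lam beta u) v = (\<Sum>x\<in>E. jacobi par lam beta u x * cnj (v x))"
    unfolding l2_inner_def
    by (subst infsum_cong_neutral[where T=E and g="\<lambda>x. jacobi par lam beta u x * cnj (v x)"])
       (use fE jacobi_eq_0_outside_closed_nbhd[OF uz] in \<open>auto simp: E_def\<close>)
  also have "\<dots> = (\<Sum>x\<in>E. (complex_of_real (beta x) * u x +
                    (\<Sum>y\<in>E. complex_of_real (jacobi_kernel par lam x y) * u y)) * cnj (v x))"
  proof (rule sum.cong[OF refl])
    fix x
    have "jacobi par lam beta u x =
          complex_of_real (beta x) * u x + (\<Sum>y\<in>E. complex_of_real (jacobi_kernel par lam x y) * u y)"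
      by (rule jacobi_eq_kernel_sum[OF finch fE]) (use uz FE in blast)+
    then show "jacobi par lam beta u x * cnj (v x) =
               (complex_of_real (beta x) * u x +
                (\<Sum>y\<in>E. complex_of_real (jacobi_kernel par lam x y) * u y)) * cnj (v x)"
      by simp
  qed
  also have "\<dots> = (\<Sum>x\<in>E. u x * cnj (complex_of_real (beta x) * v x +
                    (\<Sum>y\<in>E. complex_of_real (jacobi_kernel par lam x y) * v y)))"
    by (rule sum_symmetric_kernel) (rule jacobi_kernel_sym)
  also have "\<dots> = (\<Sum>x\<in>E. u x * cnj (jacobi par lam beta v x))"
  proof (rule sum.cong[OF refl])
    fix x
    show "u x * cnj (complex_of_real (beta x) * v x +
            (\<Sum>y\<in>E. complex_of_real (jacobi_kernel par lam x y) * v y)) =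
          u x * cnj (jacobi par lam beta v x)"
    proof (cases "x \<in> F")
      case True
      then have "par x \<in> E" "\<And>y. par y = x \<Longrightarrow> y \<in> E"
        by (auto simp: E_def closed_nbhd_def)
      then show ?thesis
        by (simp add: jacobi_eq_kernel_sum[OF finch fE])
    qed (simp add: uz)
  qed
  also have "\<dots> = l2_inner u (jacobi par lam beta v)"
    unfolding l2_inner_def
    by (subst infsum_cong_neutral[where T=E and g="\<lambda>x. u x * cnj (jacobi par lam beta v x)"])
       (use fE uz FE in auto)
  finally show ?thesis .
qed

lemma jacobi_graph_in_adjoint:
  assumes finch: "\<And>x. finite {y. par y = x}" and v: "v \<in> l2" and Jv: "jacobi par lam beta v \<in> l2"
  shows "(v, jacobi par lam beta v)
           \<in> graph_adjoint (graph_closure {(u, jacobi par lam beta u) | u. u \<in> fin_supp})"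
  unfolding graph_adjoint_def
proof (clarsimp simp: v Jv)
  fix u z assume "(u, z) \<in> graph_closure {(u, jacobi par lam beta u) |u. u \<in> fin_supp}"
  then obtain s where u: "u \<in> l2" and z: "z \<in> l2"
    and s: "\<And>n. s n \<in> {(u, jacobi par lam beta u) |u. u \<in> fin_supp}"
    and lim_fst: "(\<lambda>n. l2_norm (fst (s n) - u)) \<longlonglongrightarrow> 0"
    and lim_snd: "(\<lambda>n. l2_norm (snd (s n) - z)) \<longlonglongrightarrow> 0"
    unfolding graph_closure_def by blast
  have fst_s: "fst (s n) \<in> fin_supp" and snd_s: "snd (s n) = jacobi par lam beta (fst (s n))" for n
    using s[of n] by auto
  have "(\<lambda>n. l2_inner (snd (s n)) v) \<longlonglongrightarrow> l2_inner z v"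
    using fst_s by (intro tendsto_l2_inner_left[OF z v _ lim_snd])
                   (simp add: snd_s fin_supp_in_l2 jacobi_fin_supp[OF finch])
  moreover have "(\<lambda>n. l2_inner (fst (s n)) (jacobi par lam beta v)) \<longlonglongrightarrow> l2_inner u (jacobi par lam beta v)"
    using fst_s by (intro tendsto_l2_inner_left[OF u Jv _ lim_fst]) (simp add: fin_supp_in_l2)
  moreover have "l2_inner (snd (s n)) v = l2_inner (fst (s n)) (jacobi par lam beta v)" for n
    unfolding snd_s by (rule l2_inner_jacobi_fin_supp[OF finch fst_s])
  ultimately show "l2_inner z v = l2_inner u (jacobi par lam beta v)"
    using LIMSEQ_unique by auto
qed

lemma not_ess_selfadjoint_jacobi:
  assumes "\<And>x. finite {y. par y = x}" and "v \<in> l2" "w \<in> l2"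
    and "jacobi par lam beta v \<in> l2" "jacobi par lam beta w \<in> l2"
    and "l2_inner (jacobi par lam beta v) w \<noteq> l2_inner v (jacobi par lam beta w)"
  shows "\<not> ess_selfadjoint (jacobi par lam beta) fin_supp"
proof
  let ?G = "graph_closure {(u, jacobi par lam beta u) | u. u \<in> fin_supp}"
  assume "ess_selfadjoint (jacobi par lam beta) fin_supp"
  then have "(v, jacobi par lam beta v) \<in> ?G"
    using jacobi_graph_in_adjoint[OF assms(1,2,4)] by (simp add: ess_selfadjoint_def Let_def)
  then show False
    using jacobi_graph_in_adjoint[OF assms(1,3,5)] assms(6) by (auto simp: graph_adjoint_def)
qed

text \<open>The value of J v at the n-th ray vertex, for v supported on the ray with values p.\<close>

definition ray_recurrence :: "(nat \<Rightarrow> real) \<Rightarrow> nat \<Rightarrow> real" where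
  "ray_recurrence p n = 2 ^ n * p (Suc n) + (if n > 0 then 2 ^ (n - 1) * p (n - 1) else 0)"

definition half_powers_on :: "(nat \<Rightarrow> bool) \<Rightarrow> nat \<Rightarrow> real" where
  "half_powers_on c n = (if c n then (-1/2) ^ (n div 2) else 0)"

lemma ray_recurrence_half_powers_on_even: "ray_recurrence (half_powers_on even) n = 0"
proof (cases "even n")
  case True
  then have "odd (n - 1)" if "n > 0"
    using that by simp
  with True show ?thesis
    by (simp add: ray_recurrence_def half_powers_on_def)
next
  case False
  then obtain k where "n = 2 * k + 1"
    by (auto elim: oddE)
  then show ?thesis
    by (simp add: ray_recurrence_def half_powers_on_def power_add)
qed

lemma ray_recurrence_half_powers_on_odd:
  "ray_recurrence (half_powers_on odd) n = (if n = 0 then 1 else 0)"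
proof (cases "even n")
  case True
  show ?thesis
  proof (cases "n = 0")
    case False
    from True obtain j where "n = 2 * j"
      by (auto elim: evenE)
    with False obtain k where "n = 2 * k + 2"
      by (cases j) auto
    then show ?thesis
      by (simp add: ray_recurrence_def half_powers_on_def power_add)
  qed (simp add: ray_recurrence_def half_powers_on_def)
next
  case False
  then have "even (n - 1)" "n > 0"
    by (simp_all add: odd_pos)
  with False show ?thesis
    by (simp add: ray_recurrence_def half_powers_on_def)
qed

lemma summable_half_powers_on_sq: "summable (\<lambda>n. (half_powers_on c n)\<^sup>2)"
proof (rule summable_comparison_test')
  show "summable (\<lambda>n. 2 * (1/2::real) ^ n)"
    by (intro summable_mult summable_geometric) simp
  fix n :: nat
  have "((-1/2::real) ^ (n div 2))\<^sup>2 = (1/2) ^ (2 * (n div 2))"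
    by (simp add: power_mult_distrib mult.commute flip: power_mult)
  also have "\<dots> = 2 * (1/2) ^ (2 * (n div 2) + 1)"
    by simp
  also have "\<dots> \<le> 2 * (1/2) ^ n"
    by (intro mult_left_mono power_decreasing) auto
  finally show "norm ((half_powers_on c n)\<^sup>2) \<le> 2 * (1/2) ^ n"
    by (simp add: half_powers_on_def)
qed

locale levelled_ray =
  fixes lev :: "'a \<Rightarrow> nat" and par :: "'a \<Rightarrow> 'a" and x0 :: 'a
  assumes lev_par: "\<And>x. lev (par x) = lev x + 1"
    and finite_children: "\<And>x. finite {y. par y = x}"
begin

definition ray :: "nat \<Rightarrow> 'a" where
  "ray n = (par ^^ n) x0"

definition height :: "'a \<Rightarrow> nat" where
  "height x = lev x - lev x0"

definition weight :: "'a \<Rightarrow> real" where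
  "weight x = (if x \<in> range ray then 2 ^ height x else 1 / card {y. par y = par x})"

definition lift :: "(nat \<Rightarrow> real) \<Rightarrow> 'a \<Rightarrow> complex" where
  "lift p x = (if x \<in> range ray then p (height x) else 0)"

definition leak :: "(nat \<Rightarrow> real) \<Rightarrow> 'a \<Rightarrow> complex" where
  "leak p x = (if x \<notin> range ray \<and> par x \<in> range ray then weight x * p (height (par x)) else 0)"

lemma ray_Suc: "ray (Suc n) = par (ray n)"
  by (simp add: ray_def)

lemma height_ray [simp]: "height (ray n) = n"
proof -
  have "lev (ray n) = lev x0 + n"
    by (induction n) (simp_all add: ray_def lev_par)
  then show ?thesis
    by (simp add: height_def)
qed

lemma ray_eq_iff [simp]: "ray m = ray n \<longleftrightarrow> m = n"
  by (metis height_ray)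

lemma par_in_range_ray: "x \<in> range ray \<Longrightarrow> par x \<in> range ray"
  by (auto simp flip: ray_Suc)

lemma weight_pos: "weight x > 0"
proof (cases "x \<in> range ray")
  case False
  have "card {y. par y = par x} > 0"
    using finite_children[of "par x"] by (auto simp: card_gt_0_iff)
  then show ?thesis
    using False by (simp add: weight_def)
qed (simp add: weight_def)

lemma children_of_ray_on_ray:
  "{y \<in> range ray. par y = ray n} = (if n = 0 then {} else {ray (n - 1)})"
  by (cases n) (auto simp flip: ray_Suc)

lemma sum_children_of_ray_lift:
  "(\<Sum>y\<in>{y. par y = ray n}. weight y * lift p y) = (if n > 0 then 2 ^ (n - 1) * p (n - 1) else 0)"
proof -
  have "(\<Sum>y\<in>{y. par y = ray n}. weight y * lift p y) =
        (\<Sum>y\<in>{y \<in> range ray. par y = ray n}. weight y * lift p y)"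
    by (rule sum.mono_neutral_right) (auto simp: lift_def finite_children)
  then show ?thesis
    by (simp add: children_of_ray_on_ray weight_def lift_def)
qed

lemma jacobi_lift:
  "jacobi par weight (\<lambda>_. 0) (lift p) = (\<lambda>x. lift (ray_recurrence p) x + leak p x)"
proof
  fix x
  show "jacobi par weight (\<lambda>_. 0) (lift p) x = lift (ray_recurrence p) x + leak p x"
  proof (cases "x \<in> range ray")
    case True
    then obtain n where x: "x = ray n"
      by blast
    have "jacobi par weight (\<lambda>_. 0) (lift p) x =
          weight (ray n) * lift p (ray (Suc n)) + (if n > 0 then 2 ^ (n - 1) * p (n - 1) else 0)"
      unfolding jacobi_def x sum_children_of_ray_lift by (simp add: ray_Suc)
    then show ?thesis
      using x by (simp add: ray_recurrence_def weight_def lift_def leak_def)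
  next
    case False
    have "(\<Sum>y\<in>{y. par y = x}. weight y * lift p y) = 0"
      using False par_in_range_ray by (auto simp: lift_def intro!: sum.neutral)
    then show ?thesis
      using False by (simp add: jacobi_def lift_def leak_def)
  qed
qed

lemma lift_in_l2:
  assumes "summable (\<lambda>n. (p n)\<^sup>2)"
  shows "lift p \<in> l2"
proof -
  have "(\<lambda>n. (p n)\<^sup>2) summable_on UNIV"
    using assms by (subst summable_on_UNIV_nonneg_real_iff) auto
  then have "(\<lambda>x. (cmod (lift p x))\<^sup>2) summable_on range ray"
    by (subst summable_on_reindex) (auto simp: inj_on_def o_def lift_def)
  then show ?thesis
    unfolding l2_def mem_Collect_eq
    by (subst summable_on_cong_neutral[where T="range ray" and g="\<lambda>x. (cmod (lift p x))\<^sup>2"])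
       (auto simp: lift_def)
qed

lemma sum_children_leak_sq_le:
  assumes S: "S \<subseteq> {x. par x = y}"
  shows "(\<Sum>x\<in>S. (cmod (leak p x))\<^sup>2) \<le> (cmod (lift p y))\<^sup>2"
proof -
  define c where "c = real (card {x. par x = y})"
  have leak_le: "(cmod (leak p x))\<^sup>2 \<le> (cmod (lift p y))\<^sup>2 / c" if "x \<in> S" for x
  proof (cases "x \<notin> range ray \<and> y \<in> range ray")
    case True
    have x: "par x = y"
      using S that by auto
    then have "c \<ge> 1"
      using finite_children[of y] by (auto simp: c_def Suc_le_eq card_gt_0_iff)
    have "(cmod (leak p x))\<^sup>2 = (p (height y))\<^sup>2 / c\<^sup>2"
      using True x by (simp add: leak_def weight_def c_def norm_divide power_divide)
    also have "\<dots> \<le> (p (height y))\<^sup>2 / c"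
      using \<open>c \<ge> 1\<close> by (intro divide_left_mono) (auto simp: power2_eq_square)
    finally show ?thesis
      using True by (simp add: lift_def)
  next
    case False
    then have "leak p x = 0"
      using S that by (auto simp: leak_def)
    then show ?thesis
      by (simp add: c_def)
  qed
  have "(\<Sum>x\<in>S. (cmod (leak p x))\<^sup>2) \<le> card S * ((cmod (lift p y))\<^sup>2 / c)"
    using sum_bounded_above[of S _ "(cmod (lift p y))\<^sup>2 / c"] leak_le by simp
  also have "\<dots> \<le> c * ((cmod (lift p y))\<^sup>2 / c)"
    using card_mono[OF finite_children S] by (intro mult_right_mono) (auto simp: c_def)
  also have "\<dots> \<le> (cmod (lift p y))\<^sup>2"
    by (cases "c = 0") simp_all
  finally show ?thesis .
qed

lemma leak_in_l2:
  assumes "lift p \<in> l2"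
  shows "leak p \<in> l2"
  unfolding l2_def mem_Collect_eq
proof (rule nonneg_bdd_above_summable_on)
  have lift_sum: "(\<lambda>x. (cmod (lift p x))\<^sup>2) summable_on UNIV"
    using assms by (simp add: l2_def)
  show "bdd_above (sum (\<lambda>x. (cmod (leak p x))\<^sup>2) ` {F. F \<subseteq> UNIV \<and> finite F})"
  proof (rule bdd_aboveI2)
    fix F :: "'a set" assume "F \<in> {F. F \<subseteq> UNIV \<and> finite F}"
    then have F: "finite F"
      by simp
    have "(\<Sum>x\<in>F. (cmod (leak p x))\<^sup>2) =
          (\<Sum>y\<in>par ` F. \<Sum>x\<in>{x\<in>F. par x = y}. (cmod (leak p x))\<^sup>2)"
      by (rule sum.image_gen[OF F])
    also have "\<dots> \<le> (\<Sum>y\<in>par ` F. (cmod (lift p y))\<^sup>2)"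
      by (intro sum_mono sum_children_leak_sq_le) auto
    also have "\<dots> \<le> (\<Sum>\<^sub>\<infinity>x. (cmod (lift p x))\<^sup>2)"
      by (rule finite_sum_le_infsum[OF lift_sum]) (use F in auto)
    finally show "(\<Sum>x\<in>F. (cmod (leak p x))\<^sup>2) \<le> (\<Sum>\<^sub>\<infinity>x. (cmod (lift p x))\<^sup>2)" .
  qed
qed simp

theorem jacobi_weight_not_ess_selfadjoint:
  "\<not> ess_selfadjoint (jacobi par weight (\<lambda>_. 0)) fin_supp"
proof -
  let ?J = "jacobi par weight (\<lambda>_. 0)"
  let ?P = "half_powers_on even" and ?Q = "half_powers_on odd"
  have rec_P: "ray_recurrence ?P = (\<lambda>_. 0)" and rec_Q: "ray_recurrence ?Q = (\<lambda>n. if n = 0 then 1 else 0)"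
    by (simp_all add: fun_eq_iff ray_recurrence_half_powers_on_even ray_recurrence_half_powers_on_odd)
  have summable_delta_sq: "summable (\<lambda>n. (if n = 0 then 1 else 0 :: real)\<^sup>2)"
    by (rule summable_finite[of "{0}"]) auto
  have P: "lift ?P \<in> l2" and Q: "lift ?Q \<in> l2"
    by (simp_all add: lift_in_l2 summable_half_powers_on_sq)
  have JP: "?J (lift ?P) \<in> l2" and JQ: "?J (lift ?Q) \<in> l2"
    unfolding jacobi_lift
    by (intro l2_add lift_in_l2 leak_in_l2 P Q; simp add: rec_P rec_Q summable_delta_sq)+
  have "l2_inner (?J (lift ?P)) (lift ?Q) = 0"
    unfolding l2_inner_def jacobi_lift rec_P by (rule infsum_0) (simp add: lift_def leak_def)
  moreover have "l2_inner (lift ?P) (?J (lift ?Q)) = (\<Sum>\<^sub>\<infinity>x. if x = ray 0 then 1 else 0)"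
    unfolding l2_inner_def jacobi_lift rec_Q
    by (intro infsum_cong) (auto simp: lift_def leak_def half_powers_on_def)
  moreover have "(\<Sum>\<^sub>\<infinity>x. if x = ray 0 then 1 else 0 :: complex) = 1"
    by (subst infsum_cong_neutral[where T="{ray 0}" and g="\<lambda>_. 1"]) auto
  ultimately show ?thesis
    by (intro not_ess_selfadjoint_jacobi[OF finite_children P Q JP JQ]) simp
qed

end

lemma level_tree_finite_children:
  assumes "level_tree lev par"
  shows "finite {y. par y = x}"
  using assms unfolding level_tree_def by (cases "lev x \<ge> 1") auto

theorem theorem3:
  fixes lev :: "'a \<Rightarrow> nat" and par :: "'a \<Rightarrow> 'a"
  assumes "level_tree lev par"
  shows "\<exists>(lam :: 'a \<Rightarrow> real) (beta :: 'a \<Rightarrow> real).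
           (\<forall>x. lam x > 0) \<and> \<not> ess_selfadjoint (jacobi par lam beta) fin_supp"
proof -
  interpret levelled_ray lev par undefined
    using assms level_tree_finite_children[OF assms] by unfold_locales (simp_all add: level_tree_def)
  show ?thesis
    using weight_pos jacobi_weight_not_ess_selfadjoint by blast
qed

end
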